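(* Let $r$ be a positive integer, and let $\ell$ and $k$ be nonnegative integers such that $k\geq b(r)+2$. Suppose $d\in B_r$ satisfies $d<p_{k+1}-r$ and $d(p_{k+\ell}-r)<(d+1)(p_k-r)$. If $\displaystyle n=d\,p_{k+\ell}\prod_{i=b(r)+1}^{k-1}p_i$, then $n\in F_r$.
   Context: $p_i$ denotes the $i$-th prime. For a positive integer $r$, the Schemmel totient function $S_r$ is the multiplicative arithmetic function with $S_r(p^{\alpha})=0$ if $p\leq r$ and $S_r(p^{\alpha})=p^{\alpha-1}(p-r)$ if $p>r$, for all primes $p$ and positive integers $\alpha$ (and $S_r(1)=1$). $B_r=\{n\in\mathbb{N}: S_r(n)>0\}$, i.e. the set of positive integers whose smallest prime factor exceeds $r$, together with $1$. $F_r$ (the sparsely Schemmel totient numbers of order $r$) is the set of $n\in B_r$ such that $S_r(n)<S_r(m)$ for all $m\in B_r$ with $m>n$. $b(1)=0$, and for $r\geq 2$, $b(r)$ is the largest integer with $p_{b(r)}\leq r$. *)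

theory Defs
  imports "HOL-Computational_Algebra.Primes" "HOL-Library.Infinite_Set"
begin

text \<open>The i-th prime, 1-indexed: pr 1 = 2, pr 2 = 3, ... (pr 0 is a junk value).\<close>
definition pr :: "nat \<Rightarrow> nat" where
  "pr i = enumerate {q::nat. prime q} (i - 1)"

text \<open>Schemmel totient S_r, multiplicative with S_r(p^a) = 0 if p \<le> r,
  p^(a-1) (p - r) otherwise; S_r 1 = 1 (empty product). Only meaningful for n > 0.\<close>
definition schemmel :: "nat \<Rightarrow> nat \<Rightarrow> nat" where
  "schemmel r n = (\<Prod>p\<in>prime_factors n.
      (if p \<le> r then 0 else p ^ (multiplicity p n - 1) * (p - r)))"

definition B_set :: "nat \<Rightarrow> nat set" where
  "B_set r = {n. n > 0 \<and> schemmel r n > 0}"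

definition F_set :: "nat \<Rightarrow> nat set" where
  "F_set r = {n \<in> B_set r. \<forall>m\<in>B_set r. m > n \<longrightarrow> schemmel r n < schemmel r m}"

definition bidx :: "nat \<Rightarrow> nat" where
  "bidx r = (if r \<le> 1 then 0 else (GREATEST j. j \<ge> 1 \<and> pr j \<le> r))"

end

theory Submission
  imports Defs Complex_Main
begin

(* Write n = d q P with q = p_(k+l), P = p_(b+1) ... p_(b+u) the product of the u = k-1-b(r)
   primes following p_b(r), and V = S_r(P).  Since S_r(n)/n is the product of (1 - r/p) over the
   prime factors p of n, among which are q and the factors of P, we get S_r(n) <= d (q - r) V.
   Now let m > n lie in B_r and have t distinct prime factors.
   If t <= u, then S_r(m)/m is at least the corresponding product for the first t primes above r,
   hence at least V/P, so S_r(m) >= m V/P > d q V.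
   If t >= u + 2, then S_r(m) >= V (p_k - r)(p_(k+1) - r) > d (q - r) V by the two hypotheses on d.
   If t = u + 1, write m = c rad(m).  For c > d already S_r(m) >= c V (p_k - r) suffices; for
   c <= d an exchange argument gives S_r(m) >= V (m/P - c r) > V (d q - d r). *)

lemma prime_pr: "prime (pr i)"
  unfolding pr_def using enumerate_in_set[OF primes_infinite] by blast

lemma pr_less_pr_iff: "1 \<le> i \<Longrightarrow> 1 \<le> j \<Longrightarrow> pr i < pr j \<longleftrightarrow> i < j"
  unfolding pr_def using enumerate_mono_iff[OF primes_infinite] by auto

lemma pr_le_pr_iff: "1 \<le> i \<Longrightarrow> 1 \<le> j \<Longrightarrow> pr i \<le> pr j \<longleftrightarrow> i \<le> j"
  using pr_less_pr_iff by (meson not_le)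

lemma inj_on_pr: "inj_on pr {1..}"
  by (rule inj_onI) (metis atLeast_iff nat_neq_iff pr_less_pr_iff)

lemma ex_pr_eq: "prime q \<Longrightarrow> \<exists>i\<ge>1. pr i = q"
  using enumerate_Ex[OF primes_infinite, of q] unfolding pr_def
  by (metis diff_Suc_1 le_add1 plus_1_eq_Suc mem_Collect_eq)

lemma pr_1: "pr 1 = 2"
  unfolding pr_def by (simp add: enumerate_0 Least_equality prime_ge_2_nat)

lemma le_pr: "1 \<le> i \<Longrightarrow> i \<le> pr i"
proof (induction i rule: dec_induct)
  case base
  then show ?case using pr_1 by simp
next
  case (step n)
  then show ?case using pr_less_pr_iff[of n "Suc n"] by simp
qed

lemma pr_le_iff_le_bidx:
  assumes j: "1 \<le> j"
  shows "pr j \<le> r \<longleftrightarrow> j \<le> bidx r"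
proof (cases "r \<le> 1")
  case True
  then have "bidx r = 0" unfolding bidx_def by simp
  moreover have "2 \<le> pr j" using prime_pr prime_ge_2_nat by blast
  ultimately show ?thesis using j True by simp
next
  case False
  let ?P = "\<lambda>j. 1 \<le> j \<and> pr j \<le> r"
  have bidx: "bidx r = (GREATEST j. ?P j)" using False unfolding bidx_def by simp
  have bound: "\<forall>y. ?P y \<longrightarrow> y \<le> r" using le_pr le_trans by blast
  have "?P 1" using pr_1 False by simp
  then have "?P (bidx r)" unfolding bidx by (rule GreatestI_nat[of ?P 1 r]) (use bound in blast)
  show ?thesis
  proof
    assume "pr j \<le> r"
    then show "j \<le> bidx r" unfolding bidx using Greatest_le_nat[of ?P j r] bound j by blast
  next
    assume "j \<le> bidx r"
    then have "pr j \<le> pr (bidx r)" using \<open>?P (bidx r)\<close> j pr_le_pr_iff by simp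
    then show "pr j \<le> r" using \<open>?P (bidx r)\<close> by simp
  qed
qed

lemma less_pr_if_bidx_less: "bidx r < i \<Longrightarrow> r < pr i"
  using pr_le_iff_le_bidx[of i r] by simp

lemma pr_bidx_add_card_le:
  assumes "T \<noteq> {}" and T: "\<And>p. p \<in> T \<Longrightarrow> prime p \<and> r < p \<and> p \<le> y"
  shows "pr (bidx r + card T) \<le> y"
proof (rule ccontr)
  let ?b = "bidx r"
  assume "\<not> pr (?b + card T) \<le> y"
  then have y: "y < pr (?b + card T)" by simp
  have fin: "finite T" using T by (meson finite_atMost atMost_iff finite_subset subsetI)
  have "1 \<le> card T" using fin \<open>T \<noteq> {}\<close> by (simp add: Suc_le_eq card_gt_0_iff)
  have "T \<subseteq> pr ` {?b + 1..<?b + card T}"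
  proof
    fix p assume "p \<in> T"
    then obtain i where i: "1 \<le> i" "pr i = p" and "r < p" "p \<le> y"
      using T ex_pr_eq by blast
    then have "?b < i" using pr_le_iff_le_bidx[of i r] by auto
    moreover have "i < ?b + card T"
      using i \<open>p \<le> y\<close> y \<open>1 \<le> card T\<close> pr_less_pr_iff[of i "?b + card T"] by simp
    ultimately show "p \<in> pr ` {?b + 1..<?b + card T}" using i by auto
  qed
  then have "card T \<le> card {?b + 1..<?b + card T}"
    using card_image_le card_mono le_trans by (metis finite_atLeastLessThan finite_imageI)
  then show False using \<open>1 \<le> card T\<close> by simp
qed

text \<open>The first \<open>u\<close> primes exceeding \<open>r\<close> are \<open>p\<^bsub>b(r)+1\<^esub>, \<dots>, p\<^bsub>b(r)+u\<^esub>\<close>;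
  \<open>shifted_primorial_above r u\<close> is \<open>S\<^sub>r\<close> of their product.\<close>

definition primorial_above :: "nat \<Rightarrow> nat \<Rightarrow> nat" where
  "primorial_above r u = (\<Prod>i\<in>{bidx r + 1..bidx r + u}. pr i)"

definition shifted_primorial_above :: "nat \<Rightarrow> nat \<Rightarrow> real" where
  "shifted_primorial_above r u = (\<Prod>i\<in>{bidx r + 1..bidx r + u}. real (pr i) - real r)"

lemma primorial_above_Suc:
  "primorial_above r (Suc u) = pr (bidx r + Suc u) * primorial_above r u"
  unfolding primorial_above_def by (simp add: prod.nat_ivl_Suc')

lemma shifted_primorial_above_Suc:
  "shifted_primorial_above r (Suc u) =
     (real (pr (bidx r + Suc u)) - real r) * shifted_primorial_above r u"
  unfolding shifted_primorial_above_def by (simp add: prod.nat_ivl_Suc')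

lemma primorial_above_pos: "0 < primorial_above r u"
  unfolding primorial_above_def using prime_pr prime_gt_0_nat by (auto intro!: prod_pos)

lemma shifted_primorial_above_pos: "0 < shifted_primorial_above r u"
  unfolding shifted_primorial_above_def using less_pr_if_bidx_less by (auto intro!: prod_pos)

lemma shifted_primorial_above_mono:
  assumes "u \<le> v"
  shows "shifted_primorial_above r u \<le> shifted_primorial_above r v"
  using assms
proof (induction v rule: dec_induct)
  case (step v)
  have "1 \<le> real (pr (bidx r + Suc v)) - real r"
    using less_pr_if_bidx_less[of r "bidx r + Suc v"] by simp
  then have "1 * shifted_primorial_above r v \<le> shifted_primorial_above r (Suc v)"
    unfolding shifted_primorial_above_Suc
    using shifted_primorial_above_pos[of r v] by (intro mult_right_mono) auto
  then show ?case using step.IH by linarith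
qed simp

lemma prod_one_minus_div_pr:
  "(\<Prod>i\<in>{bidx r + 1..bidx r + u}. 1 - real r / real (pr i)) =
     shifted_primorial_above r u / real (primorial_above r u)"
proof -
  have "(\<Prod>i\<in>{bidx r + 1..bidx r + u}. 1 - real r / real (pr i)) =
        (\<Prod>i\<in>{bidx r + 1..bidx r + u}. (real (pr i) - real r) / real (pr i))"
    using prime_pr prime_gt_0_nat by (intro prod.cong) (auto simp: field_simps)
  then show ?thesis
    unfolding shifted_primorial_above_def primorial_above_def by (simp add: prod_dividef)
qed

lemma prod_first_primes_above_le:
  fixes f :: "nat \<Rightarrow> real"
  assumes "finite T" and "\<And>p. p \<in> T \<Longrightarrow> prime p \<and> r < p"
    and mono: "\<And>x y. r < x \<Longrightarrow> x \<le> y \<Longrightarrow> f x \<le> f y"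
    and nonneg: "\<And>x. r < x \<Longrightarrow> 0 \<le> f x"
  shows "(\<Prod>i\<in>{bidx r + 1..bidx r + card T}. f (pr i)) \<le> (\<Prod>p\<in>T. f p)"
  using assms(1,2)
proof (induction T rule: finite_linorder_max_induct)
  case empty
  then show ?case by simp
next
  case (insert s A)
  let ?g = "pr (bidx r + Suc (card A))"
  have "s \<notin> A" using insert.hyps(2) by blast
  then have card: "card (insert s A) = Suc (card A)" using insert.hyps(1) by simp
  have "r < ?g" by (rule less_pr_if_bidx_less) simp
  moreover have "?g \<le> s"
    using pr_bidx_add_card_le[of "insert s A" r s] insert.hyps(2) insert.prems card
    by (metis insert_iff insert_not_empty less_imp_le order_refl)
  ultimately have "f ?g \<le> f s" by (rule mono)
  moreover have "(\<Prod>i\<in>{bidx r + 1..bidx r + card A}. f (pr i)) \<le> (\<Prod>p\<in>A. f p)"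
    using insert.IH insert.prems by simp
  moreover have "0 \<le> (\<Prod>i\<in>{bidx r + 1..bidx r + card A}. f (pr i))"
    using nonneg less_pr_if_bidx_less by (auto intro!: prod_nonneg)
  moreover have "0 \<le> f s" using nonneg insert.prems by simp
  ultimately show ?case
    using insert.hyps(1) \<open>s \<notin> A\<close> card by (simp add: prod.nat_ivl_Suc' mult.commute mult_mono)
qed

lemma primorial_above_le_prod:
  assumes "finite T" and "\<And>p. p \<in> T \<Longrightarrow> prime p \<and> r < p"
  shows "real (primorial_above r (card T)) \<le> (\<Prod>p\<in>T. real p)"
  using prod_first_primes_above_le[OF assms, of real]
  unfolding primorial_above_def by simp

lemma shifted_primorial_above_le_prod:
  assumes "finite T" and "\<And>p. p \<in> T \<Longrightarrow> prime p \<and> r < p"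
  shows "shifted_primorial_above r (card T) \<le> (\<Prod>p\<in>T. real p - real r)"
  using prod_first_primes_above_le[OF assms, of "\<lambda>x. real x - real r"]
  unfolding shifted_primorial_above_def by simp

lemma exchange_factor_le:
  fixes g s Y r :: real
  assumes "0 < g" "g \<le> s" "g \<le> Y" "0 \<le> r"
  shows "(g - r) * (s * Y / g - r) \<le> (s - r) * (Y - r)"
proof -
  have "(s - r) * (Y - r) - (g - r) * (s * Y / g - r) = r * (s - g) * (Y - g) / g"
    using assms by (simp add: field_simps)
  also have "\<dots> \<ge> 0" using assms by simp
  finally show ?thesis by simp
qed

text \<open>Exchanging the primes of \<open>T\<close> one at a time, largest first, for the first primes
  exceeding \<open>r\<close>, while raising \<open>y\<close> to keep \<open>y \<cdot> \<Prod>T\<close> fixed, can only decrease the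
  product of the shifted factors; each exchange is an instance of \<open>exchange_factor_le\<close>.\<close>

lemma shifted_primorial_above_exchange_le:
  fixes y :: real
  assumes "finite T" and "\<And>p. p \<in> T \<Longrightarrow> prime p \<and> r < p \<and> real p \<le> y"
  shows "shifted_primorial_above r (card T) *
           (y * (\<Prod>p\<in>T. real p) / real (primorial_above r (card T)) - real r)
         \<le> (\<Prod>p\<in>T. real p - real r) * (y - real r)"
  using assms
proof (induction T rule: finite_linorder_max_induct)
  case empty
  then show ?case by (simp add: shifted_primorial_above_def primorial_above_def)
next
  case (insert s A)
  define g where "g = real (pr (bidx r + Suc (card A)))"
  define P where "P = real (primorial_above r (card A))"
  define V where "V = shifted_primorial_above r (card A)"
  define Y where "Y = y * (\<Prod>p\<in>A. real p) / P"
  have "s \<notin> A" using insert.hyps(2) by blast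
  then have card: "card (insert s A) = Suc (card A)" using insert.hyps(1) by simp
  have primes: "\<And>p. p \<in> A \<Longrightarrow> prime p \<and> r < p" using insert.prems by simp
  have "P > 0" unfolding P_def using primorial_above_pos by simp
  have "real r < g" unfolding g_def using less_pr_if_bidx_less by simp
  have "g \<le> real s"
    using pr_bidx_add_card_le[of "insert s A" r s] insert.hyps(2) insert.prems card
    unfolding g_def by (metis insert_iff insert_not_empty less_imp_le of_nat_le_iff order_refl)
  have "real s \<le> y" using insert.prems by simp
  moreover have "y \<le> Y"
    using primorial_above_le_prod[OF insert.hyps(1) primes] \<open>P > 0\<close> \<open>real s \<le> y\<close>
    unfolding Y_def P_def by (simp add: le_divide_eq mult_left_mono)
  ultimately have "g \<le> Y" using \<open>g \<le> real s\<close> by linarith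
  have IH: "V * (Y - real r) \<le> (\<Prod>p\<in>A. real p - real r) * (y - real r)"
    using insert.IH insert.prems unfolding V_def Y_def P_def by simp
  have "V \<ge> 0" unfolding V_def using shifted_primorial_above_pos less_imp_le by blast
  have "shifted_primorial_above r (card (insert s A)) *
          (y * (\<Prod>p\<in>insert s A. real p) / real (primorial_above r (card (insert s A))) - real r)
        = V * ((g - real r) * (real s * Y / g - real r))"
    using insert.hyps(1) \<open>s \<notin> A\<close> \<open>real r < g\<close> \<open>P > 0\<close>
    unfolding card shifted_primorial_above_Suc primorial_above_Suc g_def V_def Y_def P_def
    by (simp add: field_simps)
  also have "\<dots> \<le> V * ((real s - real r) * (Y - real r))"
    using exchange_factor_le \<open>real r < g\<close> \<open>g \<le> real s\<close> \<open>g \<le> Y\<close> \<open>V \<ge> 0\<close>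
    by (simp add: mult_left_mono)
  also have "\<dots> \<le> (real s - real r) * ((\<Prod>p\<in>A. real p - real r) * (y - real r))"
    using IH insert.prems by (simp add: mult.left_commute mult_left_mono)
  also have "\<dots> = (\<Prod>p\<in>insert s A. real p - real r) * (y - real r)"
    using insert.hyps(1) \<open>s \<notin> A\<close> by simp
  finally show ?case .
qed

lemma mem_B_set_iff: "m \<in> B_set r \<longleftrightarrow> 0 < m \<and> (\<forall>p\<in>prime_factors m. r < p)"
proof -
  have "\<And>p. p \<in> prime_factors m \<Longrightarrow>
          (if p \<le> r then 0 else p ^ (multiplicity p m - 1) * (p - r)) \<noteq> 0 \<longleftrightarrow> r < p"
    using prime_gt_0_nat by fastforce
  then show ?thesis unfolding B_set_def schemmel_def by (auto simp: prod_zero_iff)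
qed

lemma prime_mem_B_set: "prime p \<Longrightarrow> r < p \<Longrightarrow> p \<in> B_set r"
  by (simp add: mem_B_set_iff prime_prime_factors prime_gt_0_nat)

lemma mult_mem_B_set: "a \<in> B_set r \<Longrightarrow> b \<in> B_set r \<Longrightarrow> a * b \<in> B_set r"
  by (auto simp: mem_B_set_iff prime_factors_product)

lemma prod_mem_B_set:
  "(\<And>i. i \<in> I \<Longrightarrow> f i \<in> B_set r) \<Longrightarrow> prod f I \<in> B_set r"
  by (induction I rule: infinite_finite_induct)
    (auto simp: mult_mem_B_set, simp_all add: mem_B_set_iff)

lemma prod_prime_factors_dvd: "(\<Prod>p\<in>prime_factors m. p) dvd (m :: nat)"
proof (cases "m = 0")
  case False
  have "(\<Prod>p\<in>prime_factors m. p) dvd (\<Prod>p\<in>prime_factors m. p ^ multiplicity p m)"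
    by (intro prod_dvd_prod) (simp add: prime_factors_multiplicity dvd_power)
  then show ?thesis using prime_factorization_nat[of m] False by simp
qed simp

lemma schemmel_eq_mult_prod:
  assumes "m \<in> B_set r" and m: "m = c * (\<Prod>p\<in>prime_factors m. p)"
  shows "real (schemmel r m) = real c * (\<Prod>p\<in>prime_factors m. real p - real r)"
proof -
  have "0 < m" and above: "\<forall>p\<in>prime_factors m. r < p" using assms mem_B_set_iff by auto
  define e where "e = (\<Prod>p\<in>prime_factors m. p ^ (multiplicity p m - 1))"
  have power_split: "p ^ multiplicity p m = p ^ (multiplicity p m - 1) * p"
    if "p \<in> prime_factors m" for p
    using that by (cases "multiplicity p m") (auto simp: prime_factors_multiplicity)
  have "m = (\<Prod>p\<in>prime_factors m. p ^ multiplicity p m)"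
    using prime_factorization_nat \<open>0 < m\<close> .
  also have "\<dots> = e * (\<Prod>p\<in>prime_factors m. p)"
    unfolding e_def prod.distrib[symmetric] using power_split by (rule prod.cong[OF refl])
  finally have "c = e"
    using m prime_gt_0_nat by (metis (no_types, lifting) in_prime_factors_imp_prime
      mult_right_cancel not_gr0 prod_pos)
  have "schemmel r m = e * (\<Prod>p\<in>prime_factors m. p - r)"
    unfolding schemmel_def e_def prod.distrib[symmetric] using above
    by (intro prod.cong) auto
  then show ?thesis
    using \<open>c = e\<close> above by (simp add: of_nat_prod of_nat_diff less_imp_le)
qed

lemma schemmel_eq_euler_product:
  assumes "m \<in> B_set r"
  shows "real (schemmel r m) = real m * (\<Prod>p\<in>prime_factors m. 1 - real r / real p)"
proof -
  obtain c where m: "m = c * (\<Prod>p\<in>prime_factors m. p)"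
    using prod_prime_factors_dvd by (metis dvdE mult.commute)
  have "(\<Prod>p\<in>prime_factors m. real p - real r) =
        (\<Prod>p\<in>prime_factors m. real p * (1 - real r / real p))"
    using prime_gt_0_nat by (intro prod.cong) (auto simp: field_simps)
  then show ?thesis
    using schemmel_eq_mult_prod[OF assms m] by (subst (2) m) (simp add: prod.distrib of_nat_prod)
qed

lemma one_minus_div_bounds:
  "r < p \<Longrightarrow> 0 \<le> 1 - real r / real p \<and> 1 - real r / real p \<le> 1"
  by (simp add: divide_le_eq_1)

lemma schemmel_le_of_subset:
  assumes "m \<in> B_set r" and "G \<subseteq> prime_factors m"
  shows "real (schemmel r m) \<le> real m * (\<Prod>p\<in>G. 1 - real r / real p)"
proof -
  have bounds: "0 \<le> 1 - real r / real p \<and> 1 - real r / real p \<le> 1"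
    if "p \<in> prime_factors m" for p
    using that assms(1) one_minus_div_bounds mem_B_set_iff by blast
  have "(\<Prod>p\<in>prime_factors m. 1 - real r / real p) =
        (\<Prod>p\<in>prime_factors m - G. 1 - real r / real p) * (\<Prod>p\<in>G. 1 - real r / real p)"
    using prod.subset_diff[OF assms(2)] by simp
  also have "\<dots> \<le> (\<Prod>p\<in>G. 1 - real r / real p)"
    using bounds assms(2)
    by (intro mult_left_le_one_le prod_nonneg prod_le_1) (auto simp: subset_iff)
  finally show ?thesis
    unfolding schemmel_eq_euler_product[OF assms(1)] by (simp add: mult_left_mono)
qed

lemma schemmel_ge_few_prime_factors:
  assumes "m \<in> B_set r" and "card (prime_factors m) \<le> u"
  shows "real m * shifted_primorial_above r u / real (primorial_above r u) \<le> real (schemmel r m)"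
proof -
  let ?f = "\<lambda>p. 1 - real r / real p"
  let ?t = "card (prime_factors m)"
  have above: "\<And>p. p \<in> prime_factors m \<Longrightarrow> prime p \<and> r < p"
    using assms(1) mem_B_set_iff by auto
  have "(\<Prod>i\<in>{bidx r + 1..bidx r + u}. ?f (pr i)) =
        (\<Prod>i\<in>{bidx r + 1..bidx r + u} - {bidx r + 1..bidx r + ?t}. ?f (pr i)) *
        (\<Prod>i\<in>{bidx r + 1..bidx r + ?t}. ?f (pr i))"
    using assms(2) by (intro prod.subset_diff) auto
  also have "\<dots> \<le> (\<Prod>i\<in>{bidx r + 1..bidx r + ?t}. ?f (pr i))"
  proof (rule mult_left_le_one_le)
    have "\<And>i. bidx r < i \<Longrightarrow> 0 \<le> ?f (pr i) \<and> ?f (pr i) \<le> 1"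
      using one_minus_div_bounds less_pr_if_bidx_less by blast
    then show "0 \<le> (\<Prod>i\<in>{bidx r + 1..bidx r + ?t}. ?f (pr i))"
      and "0 \<le> (\<Prod>i\<in>{bidx r + 1..bidx r + u} - {bidx r + 1..bidx r + ?t}. ?f (pr i))"
      and "(\<Prod>i\<in>{bidx r + 1..bidx r + u} - {bidx r + 1..bidx r + ?t}. ?f (pr i)) \<le> 1"
      by (auto intro!: prod_nonneg prod_le_1)
  qed
  also have "\<dots> \<le> (\<Prod>p\<in>prime_factors m. ?f p)"
  proof (rule prod_first_primes_above_le[OF _ above, where f = ?f])
    fix x y :: nat
    assume "r < x" "x \<le> y"
    then have "real r / real y \<le> real r / real x" by (intro divide_left_mono) auto
    then show "?f x \<le> ?f y" by simp
  qed (use one_minus_div_bounds in auto)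
  finally have "shifted_primorial_above r u / real (primorial_above r u)
      \<le> (\<Prod>p\<in>prime_factors m. ?f p)"
    by (simp only: prod_one_minus_div_pr)
  then show ?thesis
    unfolding schemmel_eq_euler_product[OF assms(1)] times_divide_eq_right[symmetric]
    by (rule mult_left_mono) simp
qed

lemma schemmel_ge_many_prime_factors:
  assumes "m \<in> B_set r" and m: "m = c * (\<Prod>p\<in>prime_factors m. p)"
    and "u \<le> card (prime_factors m)"
  shows "real c * shifted_primorial_above r u \<le> real (schemmel r m)"
proof -
  have "shifted_primorial_above r u \<le> shifted_primorial_above r (card (prime_factors m))"
    using assms(3) by (rule shifted_primorial_above_mono)
  also have "\<dots> \<le> (\<Prod>p\<in>prime_factors m. real p - real r)"
    using assms(1) mem_B_set_iff by (intro shifted_primorial_above_le_prod) auto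
  finally show ?thesis
    unfolding schemmel_eq_mult_prod[OF assms(1) m] by (rule mult_left_mono) simp
qed

lemma schemmel_ge_of_card_eq_Suc:
  assumes "m \<in> B_set r" and m: "m = c * (\<Prod>p\<in>prime_factors m. p)"
    and card: "card (prime_factors m) = Suc u"
  shows "shifted_primorial_above r u * (real m / real (primorial_above r u) - real c * real r)
         \<le> real (schemmel r m)"
proof -
  define s where "s = Max (prime_factors m)"
  define A where "A = prime_factors m - {s}"
  have "prime_factors m \<noteq> {}" using card by auto
  then have "s \<in> prime_factors m" unfolding s_def by simp
  then have PF: "prime_factors m = insert s A" and "s \<notin> A" unfolding A_def by auto
  have "card A = u" and "finite A"
    using card \<open>s \<in> prime_factors m\<close> unfolding A_def by simp_all
  have "\<And>p. p \<in> A \<Longrightarrow> prime p \<and> r < p \<and> real p \<le> real s"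
    using assms(1) unfolding A_def s_def by (auto simp: mem_B_set_iff)
  then have "shifted_primorial_above r u *
          (real s * (\<Prod>p\<in>A. real p) / real (primorial_above r u) - real r)
        \<le> (\<Prod>p\<in>A. real p - real r) * (real s - real r)"
    using shifted_primorial_above_exchange_le[of A r "real s"] \<open>card A = u\<close>
    unfolding A_def by simp
  also have "\<dots> = (\<Prod>p\<in>prime_factors m. real p - real r)"
    unfolding PF using \<open>s \<notin> A\<close> \<open>finite A\<close> by (simp add: mult.commute)
  finally have "real c * (shifted_primorial_above r u *
          (real s * (\<Prod>p\<in>A. real p) / real (primorial_above r u) - real r))
        \<le> real (schemmel r m)"
    unfolding schemmel_eq_mult_prod[OF assms(1) m] by (rule mult_left_mono) simp
  moreover have "real m = real c * (real s * (\<Prod>p\<in>A. real p))"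
  proof -
    have "(\<Prod>p\<in>prime_factors m. p) = s * (\<Prod>p\<in>A. p)"
      unfolding PF using \<open>s \<notin> A\<close> \<open>finite A\<close> by simp
    with m have "m = c * (s * (\<Prod>p\<in>A. p))" by (simp only:)
    then show ?thesis by simp
  qed
  ultimately show ?thesis using primorial_above_pos[of r u] by (simp add: field_simps)
qed

lemma schemmel_mult_pr_primorial_above_le:
  assumes "d \<in> B_set r" and "bidx r + u < j"
  defines "n \<equiv> d * pr j * primorial_above r u"
  shows "n \<in> B_set r"
    and "real (schemmel r n) \<le> real d * (real (pr j) - real r) * shifted_primorial_above r u"
proof -
  let ?I = "{bidx r + 1..bidx r + u}"
  let ?f = "\<lambda>p. 1 - real r / real p"
  have pr_mem: "pr i \<in> B_set r" if "bidx r < i" for i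
    using that by (intro prime_mem_B_set prime_pr less_pr_if_bidx_less)
  show "n \<in> B_set r"
    unfolding n_def primorial_above_def using assms(1,2) pr_mem
    by (intro mult_mem_B_set prod_mem_B_set) auto
  then have "n > 0" by (simp add: mem_B_set_iff)
  have "inj_on pr ?I" by (rule inj_on_subset[OF inj_on_pr]) auto
  have "pr i < pr j" if "i \<in> ?I" for i
    using that assms(2) pr_less_pr_iff[of i j] by simp
  then have "pr j \<notin> pr ` ?I" by (metis imageE less_irrefl)
  have "pr j dvd n" unfolding n_def by simp
  moreover have "pr i dvd n" if "i \<in> ?I" for i
    unfolding n_def primorial_above_def using that by (intro dvd_mult dvd_prodI) auto
  ultimately have "insert (pr j) (pr ` ?I) \<subseteq> prime_factors n"
    using \<open>n > 0\<close> prime_pr by (auto intro!: prime_factorsI)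
  then have "real (schemmel r n) \<le> real n * (\<Prod>p\<in>insert (pr j) (pr ` ?I). ?f p)"
    by (rule schemmel_le_of_subset[OF \<open>n \<in> B_set r\<close>])
  also have "(\<Prod>p\<in>insert (pr j) (pr ` ?I). ?f p) =
      ?f (pr j) * (shifted_primorial_above r u / real (primorial_above r u))"
    using \<open>pr j \<notin> pr ` ?I\<close> \<open>inj_on pr ?I\<close> prod_one_minus_div_pr[of r u]
    by (simp add: prod.reindex)
  also have "real n * \<dots> = real d * (real (pr j) - real r) * shifted_primorial_above r u"
    unfolding n_def using primorial_above_pos[of r u] prime_gt_0_nat[OF prime_pr[of j]]
    by (simp add: field_simps)
  finally show "real (schemmel r n) \<le> real d * (real (pr j) - real r) * shifted_primorial_above r u" .
qed

lemma schemmel_gt_of_card_eq_Suc: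
  fixes d q u :: nat
  assumes "m \<in> B_set r" and m: "m = c * (\<Prod>p\<in>prime_factors m. p)"
    and card: "card (prime_factors m) = Suc u"
    and "d * q * primorial_above r u < m"
    and ratio: "real d * (real q - real r) < (real d + 1) * (real (pr (bidx r + u + 1)) - real r)"
  shows "real d * (real q - real r) * shifted_primorial_above r u < real (schemmel r m)"
proof -
  let ?V = "shifted_primorial_above r u"
  let ?P = "real (primorial_above r u)"
  have "0 < ?V" "0 < ?P" using shifted_primorial_above_pos primorial_above_pos by simp_all
  show ?thesis
  proof (cases "d < c")
    case True
    have "0 < real (pr (bidx r + u + 1)) - real r"
      using less_pr_if_bidx_less[of r "bidx r + u + 1"] by simp
    then have "real d * (real q - real r) * ?V < real c * shifted_primorial_above r (Suc u)"
      using ratio True \<open>0 < ?V\<close>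
      by (simp add: shifted_primorial_above_Suc mult_right_mono mult_strict_right_mono
          order_less_le_trans)
    also have "\<dots> \<le> real (schemmel r m)"
      using schemmel_ge_many_prime_factors[OF assms(1) m] card by simp
    finally show ?thesis .
  next
    case False
    have "real d * real q < real m / ?P"
      using assms(4) \<open>0 < ?P\<close> by (simp add: pos_less_divide_eq flip: of_nat_mult)
    moreover have "real c * real r \<le> real d * real r" using False by (simp add: mult_right_mono)
    ultimately have "real d * (real q - real r) < real m / ?P - real c * real r"
      by (simp add: algebra_simps)
    then have "real d * (real q - real r) * ?V < ?V * (real m / ?P - real c * real r)"
      using \<open>0 < ?V\<close> by (simp add: mult.commute)
    also have "\<dots> \<le> real (schemmel r m)"
      using schemmel_ge_of_card_eq_Suc[OF assms(1) m card] .
    finally show ?thesis .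
  qed
qed

lemma schemmel_less_of_less:
  fixes d q u :: nat
  assumes "m \<in> B_set r" and "n < m"
    and n: "n = d * q * primorial_above r u"
    and schemmel_n: "real (schemmel r n) \<le> real d * (real q - real r) * shifted_primorial_above r u"
    and next_prime: "real d + 1 \<le> real (pr (bidx r + u + 2)) - real r"
    and ratio: "real d * (real q - real r) < (real d + 1) * (real (pr (bidx r + u + 1)) - real r)"
  shows "schemmel r n < schemmel r m"
proof -
  let ?V = "shifted_primorial_above r u"
  let ?P = "real (primorial_above r u)"
  let ?g = "real (pr (bidx r + u + 1)) - real r"
  obtain c where m: "m = c * (\<Prod>p\<in>prime_factors m. p)"
    using prod_prime_factors_dvd by (metis dvdE mult.commute)
  have "0 < ?V" "0 < ?P" using shifted_primorial_above_pos primorial_above_pos by simp_all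
  consider "card (prime_factors m) \<le> u" | "card (prime_factors m) = Suc u"
    | "Suc (Suc u) \<le> card (prime_factors m)"
    by linarith
  then have "real d * (real q - real r) * ?V < real (schemmel r m)"
  proof cases
    case 1
    have "real d * (real q - real r) * ?V \<le> real n * ?V / ?P"
      using n \<open>0 < ?V\<close> \<open>0 < ?P\<close> by (simp add: algebra_simps)
    also have "\<dots> < real m * ?V / ?P"
      using \<open>n < m\<close> \<open>0 < ?V\<close> \<open>0 < ?P\<close> by (simp add: divide_strict_right_mono)
    also have "\<dots> \<le> real (schemmel r m)"
      using schemmel_ge_few_prime_factors[OF \<open>m \<in> B_set r\<close> 1] .
    finally show ?thesis .
  next
    case 2
    then show ?thesis
      using schemmel_gt_of_card_eq_Suc[OF \<open>m \<in> B_set r\<close> m] \<open>n < m\<close> n ratio by simp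
  next
    case 3
    have "0 < ?g" using less_pr_if_bidx_less[of r "bidx r + u + 1"] by simp
    have "1 \<le> c" using m \<open>m \<in> B_set r\<close> by (cases c) (auto simp: mem_B_set_iff)
    have "real d * (real q - real r) * ?V < (real d + 1) * ?g * ?V"
      using ratio \<open>0 < ?V\<close> by simp
    also have "\<dots> \<le> (real (pr (bidx r + u + 2)) - real r) * ?g * ?V"
      using next_prime \<open>0 < ?V\<close> \<open>0 < ?g\<close> by (simp add: mult_right_mono)
    also have "\<dots> = shifted_primorial_above r (Suc (Suc u))"
      by (simp add: shifted_primorial_above_Suc)
    also have "\<dots> \<le> real c * shifted_primorial_above r (Suc (Suc u))"
      using \<open>1 \<le> c\<close> shifted_primorial_above_pos[of r "Suc (Suc u)"]
      by (simp add: mult_le_cancel_right1)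
    also have "\<dots> \<le> real (schemmel r m)"
      using schemmel_ge_many_prime_factors[OF \<open>m \<in> B_set r\<close> m] 3 by simp
    finally show ?thesis .
  qed
  then show ?thesis using schemmel_n by linarith
qed

theorem theorem2p1:
  fixes r l k d n :: nat
  assumes "r \<ge> 1"
    and "k \<ge> bidx r + 2"
    and "d \<in> B_set r"
    and "int d < int (pr (k + 1)) - int r"
    and "int d * (int (pr (k + l)) - int r) < (int d + 1) * (int (pr k) - int r)"
    and "n = d * pr (k + l) * (\<Prod>i\<in>{bidx r + 1..k - 1}. pr i)"
  shows "n \<in> F_set r"
proof -
  define u where "u = k - 1 - bidx r"
  have k: "k = bidx r + u + 1" using assms(2) unfolding u_def by simp
  have n: "n = d * pr (k + l) * primorial_above r u"
    using assms(6) unfolding primorial_above_def k by simp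
  have "bidx r + u < k + l" using k by simp
  note n_bounds = schemmel_mult_pr_primorial_above_le[OF assms(3) this, folded n]
  have "real_of_int (int d + 1) \<le> real_of_int (int (pr (k + 1)) - int r)"
    using assms(4) by (simp only: of_int_le_iff)
  then have "real d + 1 \<le> real (pr (bidx r + u + 2)) - real r" using k by simp
  moreover have "real d * (real (pr (k + l)) - real r)
      < (real d + 1) * (real (pr (bidx r + u + 1)) - real r)"
    using assms(5) unfolding k by (simp only: of_int_less_iff[symmetric, where 'a = real]) simp
  ultimately show ?thesis
    unfolding F_set_def using n_bounds n schemmel_less_of_less by blast
qed

end
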